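(* Let $C\in\mathbb R^3$ be a unit vector. The set $\Delta=\{(x\cdot y,\ x\cdot C,\ y\cdot C): x,y\in\mathbb S^2\}\subset\mathbb R^3$ is convex.
   Context: $\mathbb S^2$ is the unit sphere in $\mathbb R^3$ and $\cdot$ is the Euclidean inner product. *)

theory Defs
  imports "HOL-Analysis.Analysis"
begin

end

theory Submission
  imports Defs
begin

text \<open>A triple \<open>(t, a, b)\<close> lies in the set iff the symmetric matrix with unit diagonal and
off-diagonal entries \<open>t, a, b\<close> is positive semidefinite: it is then the Gram matrix of
unit vectors \<open>x, y, e\<^sub>3\<close> with \<open>x \<bullet> y = t, x \<bullet> e\<^sub>3 = a, y \<bullet> e\<^sub>3 = b\<close>, and a rotation
taking \<open>e\<^sub>3\<close> to \<open>C\<close> finishes the argument. The positive semidefinite condition is an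
intersection of half-spaces in \<open>(t, a, b)\<close>, hence convex.\<close>

definition gram_form :: "real ^ 3 \<Rightarrow> real \<Rightarrow> real \<Rightarrow> real \<Rightarrow> real" where
  "gram_form v z1 z2 z3 =
     z1\<^sup>2 + z2\<^sup>2 + z3\<^sup>2 + 2 * (v$1) * z1 * z2 + 2 * (v$2) * z1 * z3 + 2 * (v$3) * z2 * z3"

definition gram_psd :: "real ^ 3 \<Rightarrow> bool" where
  "gram_psd v \<longleftrightarrow> (\<forall>z1 z2 z3. 0 \<le> gram_form v z1 z2 z3)"

lemma inner_vector_3:
  "(vector [a, b, c] :: real ^ 3) \<bullet> vector [d, e, f] = a * d + b * e + c * f"
  by (simp add: inner_vec_def sum_3)

lemma gram_form_eq_inner:
  "gram_form v z1 z2 z3 =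
     z1\<^sup>2 + z2\<^sup>2 + z3\<^sup>2 + v \<bullet> vector [2 * z1 * z2, 2 * z1 * z3, 2 * z2 * z3]"
  by (simp add: gram_form_def inner_vec_def sum_3 algebra_simps)

lemma convex_gram_psd: "convex {v. gram_psd v}"
proof -
  have halfspace: "convex {v. 0 \<le> q + v \<bullet> w}" for q and w :: "real ^ 3"
  proof -
    have "{v. 0 \<le> q + v \<bullet> w} = {v. - q \<le> w \<bullet> v}" by (auto simp: inner_commute)
    then show ?thesis by (simp add: convex_halfspace_ge)
  qed
  have "{v. gram_psd v} = (\<Inter>z1. \<Inter>z2. \<Inter>z3.
      {v. 0 \<le> z1\<^sup>2 + z2\<^sup>2 + z3\<^sup>2 + v \<bullet> vector [2 * z1 * z2, 2 * z1 * z3, 2 * z2 * z3]})"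
    by (simp add: set_eq_iff gram_psd_def gram_form_eq_inner)
  then show ?thesis
    by (simp add: convex_INT halfspace)
qed

lemma gram_form_of_unit_vectors:
  fixes x y c :: "'a :: real_inner"
  assumes "x \<bullet> x = 1" "y \<bullet> y = 1" "c \<bullet> c = 1"
  shows "gram_form (vector [x \<bullet> y, x \<bullet> c, y \<bullet> c]) z1 z2 z3 =
           (z1 *\<^sub>R x + z2 *\<^sub>R y + z3 *\<^sub>R c) \<bullet> (z1 *\<^sub>R x + z2 *\<^sub>R y + z3 *\<^sub>R c)"
  using assms
  by (simp add: gram_form_def inner_commute algebra_simps power2_eq_square)

lemma gram_psd_of_unit_vectors:
  fixes x y c :: "'a :: real_inner"
  assumes "norm x = 1" "norm y = 1" "norm c = 1"
  shows "gram_psd (vector [x \<bullet> y, x \<bullet> c, y \<bullet> c])"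
  using assms by (simp add: gram_psd_def gram_form_of_unit_vectors norm_eq_1)

lemma psd_binary_form_det:
  fixes A B D :: real
  assumes psd: "\<And>x y. 0 \<le> A * x\<^sup>2 + 2 * D * x * y + B * y\<^sup>2"
  shows "0 \<le> A" "0 \<le> B" "D\<^sup>2 \<le> A * B"
proof -
  show A: "0 \<le> A" using psd [of 1 0] by simp
  show B: "0 \<le> B" using psd [of 0 1] by simp
  show "D\<^sup>2 \<le> A * B"
  proof (cases "A = 0")
    case True
    have "A * (- (B + 1))\<^sup>2 + 2 * D * (- (B + 1)) * D + B * D\<^sup>2 = (B + 2) * (- D\<^sup>2)"
      using True by (simp add: power2_eq_square algebra_simps)
    then have "0 \<le> (B + 2) * (- D\<^sup>2)" using psd [of "- (B + 1)" D] by simp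
    moreover have "0 < B + 2" using B by simp
    ultimately have "0 \<le> - D\<^sup>2" by (metis mult_le_cancel_left_pos mult_zero_right)
    with True show ?thesis by simp
  next
    case False
    have "A * D\<^sup>2 + 2 * D * D * (- A) + B * (- A)\<^sup>2 = A * (A * B - D\<^sup>2)"
      by (simp add: power2_eq_square algebra_simps)
    then have "0 \<le> A * (A * B - D\<^sup>2)" using psd [of D "- A"] by simp
    with A False show ?thesis by (simp add: zero_le_mult_iff)
  qed
qed

text \<open>Substituting \<open>z\<^sub>3 = -(a z\<^sub>1 + b z\<^sub>2)\<close> leaves the Schur complement of the \<open>(3,3)\<close> entry.\<close>

lemma gram_psd_schur:
  assumes "gram_psd (vector [t, a, b])"
  shows "(t - a * b)\<^sup>2 \<le> (1 - a\<^sup>2) * (1 - b\<^sup>2)"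
proof (rule psd_binary_form_det(3))
  fix z1 z2
  have "gram_form (vector [t, a, b]) z1 z2 (- (a * z1 + b * z2)) =
          (1 - a\<^sup>2) * z1\<^sup>2 + 2 * (t - a * b) * z1 * z2 + (1 - b\<^sup>2) * z2\<^sup>2"
    by (simp add: gram_form_def power2_eq_square algebra_simps)
  with assms show "0 \<le> (1 - a\<^sup>2) * z1\<^sup>2 + 2 * (t - a * b) * z1 * z2 + (1 - b\<^sup>2) * z2\<^sup>2"
    by (metis gram_psd_def)
qed

lemma gram_psd_diagonal_bound:
  assumes "gram_psd (vector [t, a, b])"
  shows "a\<^sup>2 \<le> 1" "b\<^sup>2 \<le> 1"
  using assms [unfolded gram_psd_def, rule_format, of a 0 "-1"]
        assms [unfolded gram_psd_def, rule_format, of 0 b "-1"]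
  by (simp_all add: gram_form_def power2_eq_square)

text \<open>The witnesses are \<open>x = (s, 0, a)\<close> and \<open>y = (p, q, b)\<close> with \<open>s = \<surd>(1 - a\<^sup>2)\<close> and
\<open>p = (t - a b) / s\<close>. When \<open>s = 0\<close> division yields \<open>p = 0\<close>, which is still right because the
Schur bound then forces \<open>t = a b\<close>.\<close>

lemma unit_pair_at_axis_with_inner:
  fixes a b t :: real
  assumes a: "a\<^sup>2 \<le> 1" and b: "b\<^sup>2 \<le> 1" and schur: "(t - a * b)\<^sup>2 \<le> (1 - a\<^sup>2) * (1 - b\<^sup>2)"
  obtains x y :: "real ^ 3"
  where "norm x = 1" "norm y = 1" "x \<bullet> y = t" "x \<bullet> axis 3 1 = a" "y \<bullet> axis 3 1 = b"
proof -
  define s where "s = sqrt (1 - a\<^sup>2)"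
  define p where "p = (t - a * b) / s"
  define q where "q = sqrt (1 - b\<^sup>2 - p\<^sup>2)"
  have s2: "s\<^sup>2 = 1 - a\<^sup>2" using a by (simp add: s_def)
  have sp: "s * p = t - a * b"
  proof (cases "s = 0")
    case True
    then show ?thesis using schur s2 by (simp add: p_def)
  qed (simp add: p_def)
  have "p\<^sup>2 \<le> 1 - b\<^sup>2"
  proof (cases "s = 0")
    case True
    then show ?thesis using b by (simp add: p_def)
  next
    case False
    have "p\<^sup>2 * (1 - a\<^sup>2) = (t - a * b)\<^sup>2"
      unfolding sp [symmetric] s2 [symmetric] power_mult_distrib by (rule mult.commute)
    with schur have "p\<^sup>2 * (1 - a\<^sup>2) \<le> (1 - b\<^sup>2) * (1 - a\<^sup>2)"
      by (simp add: mult.commute)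
    moreover have "0 < 1 - a\<^sup>2" using False s2 by (metis zero_less_power2)
    ultimately show ?thesis by simp
  qed
  then have q2: "q\<^sup>2 = 1 - b\<^sup>2 - p\<^sup>2" by (simp add: q_def)
  have e3: "axis 3 (1::real) = (vector [0, 0, 1] :: real ^ 3)"
    by (simp add: vec_eq_iff forall_3 axis_def)
  show ?thesis
    by (rule that [of "vector [s, 0, a]" "vector [p, q, b]"])
       (use s2 q2 sp in \<open>simp_all add: norm_eq_1 e3 inner_vector_3 power2_eq_square algebra_simps\<close>)
qed

lemma gram_psd_realised:
  fixes C :: "real ^ 3"
  assumes "norm C = 1" and "gram_psd v"
  shows "\<exists>x y. v = vector [x \<bullet> y, x \<bullet> C, y \<bullet> C] \<and> norm x = 1 \<and> norm y = 1"
proof -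
  have v: "v = vector [v$1, v$2, v$3]"
    by (simp add: vec_eq_iff forall_3)
  obtain x y :: "real ^ 3" where xy: "norm x = 1" "norm y = 1" "x \<bullet> y = v$1"
      "x \<bullet> axis 3 1 = v$2" "y \<bullet> axis 3 1 = v$3"
    using unit_pair_at_axis_with_inner gram_psd_diagonal_bound gram_psd_schur assms(2) v
    by metis
  obtain f :: "real ^ 3 \<Rightarrow> real ^ 3"
    where f: "orthogonal_transformation f" "f (axis 3 1) = C"
    using orthogonal_transformation_exists [of "axis 3 1" C] assms(1) by auto
  have f_inner: "f u \<bullet> f w = u \<bullet> w" for u w
    using f(1) by (simp add: orthogonal_transformation_def)
  have "v = vector [f x \<bullet> f y, f x \<bullet> C, f y \<bullet> C]"
    using xy v by (simp flip: f(2) add: f_inner)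
  moreover have "norm (f x) = 1" "norm (f y) = 1"
    using xy f(1) by (simp_all add: orthogonal_transformation_norm)
  ultimately show ?thesis by blast
qed

theorem mainTheorem5:
  fixes C :: "real ^ 3"
  assumes "norm C = 1"
  shows "convex {vector [x \<bullet> y, x \<bullet> C, y \<bullet> C] :: real ^ 3 | x y :: real ^ 3.
                   norm x = 1 \<and> norm y = 1}"
proof -
  have "{vector [x \<bullet> y, x \<bullet> C, y \<bullet> C] :: real ^ 3 | x y :: real ^ 3.
           norm x = 1 \<and> norm y = 1} = {v. gram_psd v}"
    using gram_psd_of_unit_vectors [OF _ _ assms] gram_psd_realised [OF assms] by blast
  with convex_gram_psd show ?thesis by simp
qed

end
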